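(* For a regular $T_1$-space $X$ the following are equivalent: (1) $X$ is metrizable; (2) $X$ has a base which is $\sigma$-discrete at non-isolated points; (3) $X$ has a base which is $\sigma$-locally finite at non-isolated points.
   Context: $I(X)$ is the set of isolated points. A family is locally finite (resp. discrete) at non-isolated points if each $x\in X\setminus I(X)$ has a neighborhood meeting at most finitely many (resp. at most one) of its members. A base $\mathcal{B}=\bigcup_{i\in\mathbb{N}}\mathcal{B}_i$ is $\sigma$-locally finite (resp. $\sigma$-discrete) at non-isolated points if each $\mathcal{B}_i$ is locally finite (resp. discrete) at non-isolated points. *)

theory Defs
  imports "HOL-Analysis.Analysis"
begin

definition isolated_points :: "'a topology \<Rightarrow> 'a set" where
  "isolated_points X = {x \<in> topspace X. openin X {x}}"

definition is_base :: "'a topology \<Rightarrow> 'a set set \<Rightarrow> bool" where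
  "is_base X \<B> \<longleftrightarrow> (\<forall>V \<in> \<B>. openin X V) \<and>
     (\<forall>U x. openin X U \<and> x \<in> U \<longrightarrow> (\<exists>V \<in> \<B>. x \<in> V \<and> V \<subseteq> U))"

definition locally_finite_at_nonisolated :: "'a topology \<Rightarrow> 'a set set \<Rightarrow> bool" where
  "locally_finite_at_nonisolated X \<F> \<longleftrightarrow>
     (\<forall>x \<in> topspace X - isolated_points X.
        \<exists>N. openin X N \<and> x \<in> N \<and> finite {U \<in> \<F>. U \<inter> N \<noteq> {}})"

definition discrete_at_nonisolated :: "'a topology \<Rightarrow> 'a set set \<Rightarrow> bool" where
  "discrete_at_nonisolated X \<F> \<longleftrightarrow>
     (\<forall>x \<in> topspace X - isolated_points X.
        \<exists>N. openin X N \<and> x \<in> N \<and>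
          (\<forall>U1 \<in> \<F>. \<forall>U2 \<in> \<F>. U1 \<inter> N \<noteq> {} \<and> U2 \<inter> N \<noteq> {} \<longrightarrow> U1 = U2))"

definition sigma_locally_finite_at_nonisolated :: "'a topology \<Rightarrow> 'a set set \<Rightarrow> bool" where
  "sigma_locally_finite_at_nonisolated X \<B> \<longleftrightarrow>
     (\<exists>\<B>s :: nat \<Rightarrow> 'a set set. \<B> = (\<Union>i. \<B>s i) \<and>
        (\<forall>i. locally_finite_at_nonisolated X (\<B>s i)))"

definition sigma_discrete_at_nonisolated :: "'a topology \<Rightarrow> 'a set set \<Rightarrow> bool" where
  "sigma_discrete_at_nonisolated X \<B> \<longleftrightarrow>
     (\<exists>\<B>s :: nat \<Rightarrow> 'a set set. \<B> = (\<Union>i. \<B>s i) \<and>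
        (\<forall>i. discrete_at_nonisolated X (\<B>s i)))"

end

theory Submission
  imports Defs
begin

text \<open>
  (1) \<Rightarrow> (2): in a metric space, Stone's well-ordering construction gives, for every pair
  of radii 1/(j+1) and 1/(n+1), a discrete family of open cells; together they form a base.
  (2) \<Rightarrow> (3): a family that is discrete at a point is locally finite there.
  (3) \<Rightarrow> (1): a variant of the Nagata-Smirnov argument. Closures of unions of such families
  are unions of closures, which makes the space normal. Urysohn functions attached to
  pairs of base members yield countably many pseudometrics, and their weighted sum is a
  metric inducing the topology. Isolated points need no local finiteness, since every
  construction is trivially controlled on the open neighbourhood {x}.
\<close>

text \<open>A fixed well-ordering of the whole type; it is used to assign to every point a
  canonical ball containing it.\<close>
definition well_order_of_type :: "'a rel" where
  "well_order_of_type = (SOME r. Well_order r \<and> Field r = UNIV)"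

lemma well_order_of_type:
  "Well_order (well_order_of_type :: 'a rel)" "Field (well_order_of_type :: 'a rel) = UNIV"
  using someI_ex[OF well_ordering[where 'a='a]] unfolding well_order_of_type_def by blast+

lemma well_order_of_type_least:
  fixes A :: "'a set"
  assumes "A \<noteq> {}"
  obtains a where "a \<in> A" "\<And>b. b \<in> A \<Longrightarrow> (a, b) \<in> well_order_of_type"
proof -
  have "Linear_order (well_order_of_type :: 'a rel)" "wf ((well_order_of_type :: 'a rel) - Id)"
    using well_order_of_type(1) unfolding well_order_on_def by blast+
  then have "\<forall>A \<subseteq> Field (well_order_of_type :: 'a rel). A \<noteq> {} \<longrightarrow>
      (\<exists>a \<in> A. \<forall>b \<in> A. (a, b) \<in> well_order_of_type)"
    using Linear_order_wf_diff_Id[of "well_order_of_type :: 'a rel"] by blast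
  then obtain a where "a \<in> A" "\<forall>b \<in> A. (a, b) \<in> well_order_of_type"
    using assms unfolding well_order_of_type(2) by blast
  then show ?thesis using that by blast
qed

lemma well_order_of_type_linear:
  "((a :: 'a), b) \<in> well_order_of_type \<longleftrightarrow> (b, a) \<notin> well_order_of_type - Id"
proof -
  have "Linear_order (well_order_of_type :: 'a rel)"
    using well_order_of_type(1) unfolding well_order_on_def by blast
  then show ?thesis
    using Linear_order_in_diff_Id[of well_order_of_type a b] by (simp add: well_order_of_type(2))
qed

definition discrete_in :: "'a topology \<Rightarrow> 'a set set \<Rightarrow> bool" where
  "discrete_in X \<F> \<longleftrightarrow>
     (\<forall>x \<in> topspace X. \<exists>N. openin X N \<and> x \<in> N \<and>
        (\<forall>U1 \<in> \<F>. \<forall>U2 \<in> \<F>. U1 \<inter> N \<noteq> {} \<and> U2 \<inter> N \<noteq> {} \<longrightarrow> U1 = U2))"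

context Metric_space
begin

definition least_centre :: "real \<Rightarrow> 'a \<Rightarrow> 'a" where
  "least_centre \<epsilon> x = (SOME s. s \<in> M \<and> x \<in> mball s \<epsilon> \<and>
      (\<forall>t. t \<in> M \<and> x \<in> mball t \<epsilon> \<longrightarrow> (s, t) \<in> well_order_of_type))"

lemma least_centre:
  assumes "x \<in> M" "\<epsilon> > 0"
  shows "least_centre \<epsilon> x \<in> M" "x \<in> mball (least_centre \<epsilon> x) \<epsilon>"
    and "\<And>t. t \<in> M \<Longrightarrow> x \<in> mball t \<epsilon> \<Longrightarrow> (least_centre \<epsilon> x, t) \<in> well_order_of_type"
proof -
  have "{s \<in> M. x \<in> mball s \<epsilon>} \<noteq> {}" using assms by force
  then obtain s where "s \<in> M" "x \<in> mball s \<epsilon>"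
      "\<And>t. t \<in> M \<Longrightarrow> x \<in> mball t \<epsilon> \<Longrightarrow> (s, t) \<in> well_order_of_type"
    by (rule well_order_of_type_least) blast+
  then have "\<exists>s. s \<in> M \<and> x \<in> mball s \<epsilon> \<and>
      (\<forall>t. t \<in> M \<and> x \<in> mball t \<epsilon> \<longrightarrow> (s, t) \<in> well_order_of_type)" by blast
  from someI_ex[OF this] show "least_centre \<epsilon> x \<in> M" "x \<in> mball (least_centre \<epsilon> x) \<epsilon>"
    and "\<And>t. t \<in> M \<Longrightarrow> x \<in> mball t \<epsilon> \<Longrightarrow> (least_centre \<epsilon> x, t) \<in> well_order_of_type"
    unfolding least_centre_def by blast+
qed

text \<open>Stone's construction: the cell of a centre s consists of the \<delta>-balls around those
  points whose least \<epsilon>-centre is s and whose 3\<delta>-ball stays inside the \<epsilon>-ball of s.\<close>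
definition stone_cell :: "real \<Rightarrow> real \<Rightarrow> 'a \<Rightarrow> 'a set" where
  "stone_cell \<epsilon> \<delta> s = \<Union>{mball x \<delta> | x. x \<in> M \<and> least_centre \<epsilon> x = s \<and> mball x (3 * \<delta>) \<subseteq> mball s \<epsilon>}"

lemma openin_stone_cell: "openin mtopology (stone_cell \<epsilon> \<delta> s)"
  unfolding stone_cell_def by (intro openin_Union) auto

lemma stone_cell_subset: "stone_cell \<epsilon> \<delta> s \<subseteq> mball s \<epsilon>"
proof
  fix y assume "y \<in> stone_cell \<epsilon> \<delta> s"
  then obtain x where x: "mball x (3 * \<delta>) \<subseteq> mball s \<epsilon>" "y \<in> mball x \<delta>"
    unfolding stone_cell_def by blast
  then have "d x y < \<delta>" by simp
  then have "d x y < 3 * \<delta>" using nonneg[of x y] by linarith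
  with x(2) have "y \<in> mball x (3 * \<delta>)" by simp
  with x(1) show "y \<in> mball s \<epsilon>" by blast
qed

lemma stone_cell_cover:
  assumes "x \<in> M" "\<epsilon> > 0"
  obtains n where "x \<in> stone_cell \<epsilon> (1 / Suc n) (least_centre \<epsilon> x)"
proof -
  let ?s = "least_centre \<epsilon> x"
  have s: "?s \<in> M" "d ?s x < \<epsilon>" using least_centre[OF assms] by auto
  obtain n where n: "1 / real (Suc n) < (\<epsilon> - d ?s x) / 3"
    using reals_Archimedean[of "(\<epsilon> - d ?s x) / 3"] s(2) by (auto simp: inverse_eq_divide)
  have "mball x (3 * (1 / Suc n)) \<subseteq> mball ?s \<epsilon>"
  proof
    fix t assume "t \<in> mball x (3 * (1 / Suc n))"
    then show "t \<in> mball ?s \<epsilon>" using s n triangle[of ?s x t] assms(1) by auto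
  qed
  moreover have "x \<in> mball x (1 / Suc n)" using assms(1) by simp
  ultimately have "x \<in> stone_cell \<epsilon> (1 / Suc n) ?s"
    using assms(1) unfolding stone_cell_def by blast
  then show thesis by (rule that)
qed

text \<open>Cells of different centres are \<delta>-separated: a point of the later cell lies
  outside the \<epsilon>-ball of the earlier centre, which contains the whole 3\<delta>-ball around a
  point of the earlier cell.\<close>
lemma stone_cells_separated_ordered:
  assumes "\<epsilon> > 0" "s \<in> M" "s \<noteq> t" "(s, t) \<in> well_order_of_type"
    and "y \<in> stone_cell \<epsilon> \<delta> s" "z \<in> stone_cell \<epsilon> \<delta> t"
  shows "\<delta> \<le> d y z"
proof -
  obtain a where a: "a \<in> M" "mball a (3 * \<delta>) \<subseteq> mball s \<epsilon>" "y \<in> mball a \<delta>"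
    using assms(5) unfolding stone_cell_def by blast
  obtain b where b: "b \<in> M" "least_centre \<epsilon> b = t" "z \<in> mball b \<delta>"
    using assms(6) unfolding stone_cell_def by blast
  have "b \<notin> mball s \<epsilon>"
  proof
    assume "b \<in> mball s \<epsilon>"
    then have "(t, s) \<in> well_order_of_type" using least_centre(3)[OF b(1) assms(1,2)] b(2) by simp
    with assms(3,4) show False using well_order_of_type_linear[of s t] by blast
  qed
  then have "b \<notin> mball a (3 * \<delta>)" using a(2) by blast
  then have "3 * \<delta> \<le> d a b" using a(1) b(1) by (simp add: not_less)
  moreover have "d a b \<le> d a y + d y z + d z b"
    using triangle[of a y b] triangle[of y z b] a b by auto
  moreover have "d a y < \<delta>" using a(3) by simp
  moreover have "d z b < \<delta>" using b(3) commute[of b z] by simp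
  ultimately show ?thesis by linarith
qed

lemma stone_cells_separated:
  assumes "\<epsilon> > 0" "s \<in> M" "t \<in> M" "s \<noteq> t"
    and "y \<in> stone_cell \<epsilon> \<delta> s" "z \<in> stone_cell \<epsilon> \<delta> t"
  shows "\<delta> \<le> d y z"
proof -
  consider "(s, t) \<in> well_order_of_type" | "(t, s) \<in> well_order_of_type"
    using well_order_of_type_linear[of s t] by blast
  then show ?thesis
  proof cases
    case 1
    then show ?thesis by (rule stone_cells_separated_ordered[OF assms(1,2,4) _ assms(5,6)])
  next
    case 2
    have "\<delta> \<le> d z y" using stone_cells_separated_ordered[OF assms(1,3) _ 2 assms(6,5)] assms(4) by blast
    then show ?thesis using commute[of z y] by simp
  qed
qed

lemma discrete_stone_cells:
  assumes "\<epsilon> > 0" "\<delta> > 0"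
  shows "discrete_in mtopology ((\<lambda>s. stone_cell \<epsilon> \<delta> s) ` M)"
  unfolding discrete_in_def
proof
  fix x assume x: "x \<in> topspace mtopology"
  let ?F = "(\<lambda>s. stone_cell \<epsilon> \<delta> s) ` M"
  show "\<exists>N. openin mtopology N \<and> x \<in> N \<and>
      (\<forall>U1 \<in> ?F. \<forall>U2 \<in> ?F. U1 \<inter> N \<noteq> {} \<and> U2 \<inter> N \<noteq> {} \<longrightarrow> U1 = U2)"
  proof (intro exI[of _ "mball x (\<delta> / 2)"] conjI ballI impI)
  show "openin mtopology (mball x (\<delta> / 2))" "x \<in> mball x (\<delta> / 2)"
    using x assms by auto
  fix U1 U2 assume "U1 \<in> (\<lambda>s. stone_cell \<epsilon> \<delta> s) ` M" "U2 \<in> (\<lambda>s. stone_cell \<epsilon> \<delta> s) ` M"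
    and meet: "U1 \<inter> mball x (\<delta> / 2) \<noteq> {} \<and> U2 \<inter> mball x (\<delta> / 2) \<noteq> {}"
  then obtain s t y z where st: "s \<in> M" "t \<in> M" "U1 = stone_cell \<epsilon> \<delta> s" "U2 = stone_cell \<epsilon> \<delta> t"
    and yz: "y \<in> U1" "z \<in> U2" "y \<in> mball x (\<delta> / 2)" "z \<in> mball x (\<delta> / 2)"
    by blast
  have "d y z < \<delta>"
    using yz(3,4) triangle[of y x z] commute[of x y] by auto
  moreover have "\<delta> \<le> d y z" if "s \<noteq> t"
    using stone_cells_separated[OF assms(1) st(1,2) that, where y=y and z=z] yz(1,2) st(3,4) by simp
  ultimately show "U1 = U2" using st by force
  qed
qed

lemma sigma_discrete_base:
  obtains \<B>s :: "nat \<Rightarrow> 'a set set"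
  where "is_base mtopology (\<Union>i. \<B>s i)" "\<And>i. discrete_in mtopology (\<B>s i)"
proof
  define \<B>s where "\<B>s k = (\<lambda>s. stone_cell (1 / Suc (fst (prod_decode k))) (1 / Suc (snd (prod_decode k))) s) ` M"
    for k
  show "discrete_in mtopology (\<B>s i)" for i
    unfolding \<B>s_def by (rule discrete_stone_cells) auto
  show "is_base mtopology (\<Union>i. \<B>s i)"
    unfolding is_base_def
  proof (intro conjI allI impI ballI)
    fix V assume "V \<in> (\<Union>i. \<B>s i)"
    then show "openin mtopology V" unfolding \<B>s_def using openin_stone_cell by blast
  next
    fix W x assume "openin mtopology W \<and> x \<in> W"
    then obtain r where r: "r > 0" "mball x r \<subseteq> W" and x: "x \<in> M"
      unfolding openin_mtopology by blast
    obtain j where j: "1 / real (Suc j) < r / 2"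
      using reals_Archimedean[of "r / 2"] r(1) by (auto simp: inverse_eq_divide)
    define \<epsilon> where "\<epsilon> = 1 / real (Suc j)"
    have \<epsilon>: "\<epsilon> > 0" by (simp add: \<epsilon>_def)
    define s where "s = least_centre \<epsilon> x"
    obtain n where n: "x \<in> stone_cell \<epsilon> (1 / Suc n) s"
      using stone_cell_cover[OF x \<epsilon>] unfolding s_def .
    have "s \<in> M" unfolding s_def by (rule least_centre(1)[OF x \<epsilon>])
    then have "stone_cell \<epsilon> (1 / Suc n) s \<in> \<B>s (prod_encode (j, n))"
      unfolding \<B>s_def \<epsilon>_def by simp
    moreover have "stone_cell \<epsilon> (1 / Suc n) s \<subseteq> mball x r"
    proof
      fix y assume "y \<in> stone_cell \<epsilon> (1 / Suc n) s"
      then have "x \<in> mball s \<epsilon>" "y \<in> mball s \<epsilon>" using stone_cell_subset n by blast+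
      then show "y \<in> mball x r" using triangle[of x s y] commute[of x s] j unfolding \<epsilon>_def by auto
    qed
    ultimately show "\<exists>V \<in> (\<Union>i. \<B>s i). x \<in> V \<and> V \<subseteq> W" using n r(2) by blast
  qed
qed

end

lemma metrizable_imp_sigma_discrete_base:
  assumes "metrizable_space X"
  shows "\<exists>\<B>. is_base X \<B> \<and> sigma_discrete_at_nonisolated X \<B>"
proof -
  obtain M d where Md: "Metric_space M d" "X = Metric_space.mtopology M d"
    using assms unfolding metrizable_space_def by blast
  obtain \<B>s :: "nat \<Rightarrow> 'a set set" where "is_base X (\<Union>i. \<B>s i)" "\<And>i. discrete_in X (\<B>s i)"
    using Metric_space.sigma_discrete_base[OF Md(1)] Md(2) by blast
  then show ?thesis
    unfolding sigma_discrete_at_nonisolated_def discrete_at_nonisolated_def discrete_in_def by blast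
qed

lemma discrete_imp_locally_finite_at_nonisolated:
  assumes "discrete_at_nonisolated X \<F>"
  shows "locally_finite_at_nonisolated X \<F>"
  unfolding locally_finite_at_nonisolated_def
proof
  fix x assume "x \<in> topspace X - isolated_points X"
  then obtain N where N: "openin X N" "x \<in> N"
      and one: "\<And>U1 U2. U1 \<in> \<F> \<Longrightarrow> U2 \<in> \<F> \<Longrightarrow> U1 \<inter> N \<noteq> {} \<Longrightarrow> U2 \<inter> N \<noteq> {} \<Longrightarrow> U1 = U2"
    using assms unfolding discrete_at_nonisolated_def by meson
  have "finite {U \<in> \<F>. U \<inter> N \<noteq> {}}" (is "finite ?S")
  proof (cases "?S = {}")
    case False
    then obtain U where "U \<in> ?S" by blast
    then have "?S \<subseteq> {U}" using one by blast
    then show ?thesis by (rule finite_subset) simp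
  qed (metis finite.emptyI)
  with N show "\<exists>N. openin X N \<and> x \<in> N \<and> finite {U \<in> \<F>. U \<inter> N \<noteq> {}}" by blast
qed

lemma locally_finite_at_nonisolated_subset:
  assumes "locally_finite_at_nonisolated X \<F>" "\<G> \<subseteq> \<F>"
  shows "locally_finite_at_nonisolated X \<G>"
proof -
  have "finite {U \<in> \<G>. U \<inter> N \<noteq> {}}" if "finite {U \<in> \<F>. U \<inter> N \<noteq> {}}" for N
    by (rule finite_subset[OF _ that]) (use assms(2) in blast)
  then show ?thesis
    using assms(1) unfolding locally_finite_at_nonisolated_def by blast
qed

text \<open>The closure of the union of a family that is locally finite at non-isolated points
  is the union of the closures: at an isolated point the closure adds nothing, and at a
  non-isolated point only finitely many members matter.\<close>
lemma closure_of_Union_locally_finite_at_nonisolated: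
  assumes "locally_finite_at_nonisolated X \<F>"
  shows "X closure_of (\<Union>\<F>) \<subseteq> (\<Union>V \<in> \<F>. X closure_of V)"
proof
  fix p assume p: "p \<in> X closure_of \<Union>\<F>"
  then have pX: "p \<in> topspace X" using in_closure_of by fast
  show "p \<in> (\<Union>V \<in> \<F>. X closure_of V)"
  proof (cases "p \<in> isolated_points X")
    case True
    then have "openin X {p}" by (simp add: isolated_points_def)
    then have "\<exists>y \<in> \<Union>\<F>. y \<in> {p}" using p unfolding in_closure_of by blast
    then obtain V where "V \<in> \<F>" "p \<in> V" by blast
    moreover have "p \<in> X closure_of V" using pX \<open>p \<in> V\<close> unfolding in_closure_of by blast
    ultimately show ?thesis by blast
  next
    case False
    then obtain N where N: "openin X N" "p \<in> N" "finite {U \<in> \<F>. U \<inter> N \<noteq> {}}"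
      using assms pX unfolding locally_finite_at_nonisolated_def by blast
    let ?\<G> = "{U \<in> \<F>. U \<inter> N \<noteq> {}}"
    have "p \<in> N \<inter> X closure_of \<Union>\<F>" using p N by blast
    also have "\<dots> \<subseteq> X closure_of (N \<inter> \<Union>\<F>)" by (rule openin_Int_closure_of_subset[OF N(1)])
    also have "\<dots> \<subseteq> X closure_of (\<Union>?\<G>)" by (intro closure_of_mono) auto
    also have "\<dots> = (\<Union>V \<in> ?\<G>. X closure_of V)" using N(3) by (simp add: closure_of_Union)
    also have "\<dots> \<subseteq> (\<Union>V \<in> \<F>. X closure_of V)" by auto
    finally show ?thesis .
  qed
qed

lemma regular_space_closure_nbhd:
  assumes "regular_space X" "openin X W" "x \<in> W"
  shows "\<exists>U. openin X U \<and> x \<in> U \<and> X closure_of U \<subseteq> W"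
proof -
  have "closedin X (topspace X - W)" "x \<in> topspace X - (topspace X - W)"
    using assms(2,3) openin_subset by fastforce+
  then obtain U where U: "openin X U" "x \<in> U" "disjnt (topspace X - W) (X closure_of U)"
    using assms(1) unfolding regular_space by blast
  then have "X closure_of U \<subseteq> W" using closure_of_subset_topspace by (fastforce simp: disjnt_iff)
  with U show ?thesis by blast
qed

text \<open>Given disjoint closed S and T, the base members whose closures miss T are grouped
  into countably many open sets covering S whose closures still miss T.\<close>
lemma sigma_locally_finite_base_cover:
  fixes \<B>s :: "nat \<Rightarrow> 'a set set"
  assumes reg: "regular_space X" and base: "is_base X (\<Union>i. \<B>s i)"
    and lf: "\<And>i. locally_finite_at_nonisolated X (\<B>s i)"
    and "closedin X S" "closedin X T" "disjnt S T"
  shows "\<exists>h :: nat \<Rightarrow> 'a set.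
    (\<forall>n. openin X (h n)) \<and> (\<forall>n. disjnt T (X closure_of (h n))) \<and> S \<subseteq> (\<Union>n. h n)"
proof -
  define h where "h n = \<Union>{V \<in> \<B>s n. disjnt T (X closure_of V)}" for n
  have open_base: "openin X V" if "V \<in> \<B>s i" for V i
    using base that unfolding is_base_def by blast
  have open_h: "openin X (h n)" for n
    unfolding h_def by (rule openin_Union) (use open_base in blast)
  have closure_h: "disjnt T (X closure_of (h n))" for n
  proof -
    have "locally_finite_at_nonisolated X {V \<in> \<B>s n. disjnt T (X closure_of V)}"
      by (rule locally_finite_at_nonisolated_subset[OF lf]) blast
    then have "X closure_of (h n) \<subseteq> (\<Union>V \<in> {V \<in> \<B>s n. disjnt T (X closure_of V)}. X closure_of V)"
      unfolding h_def by (rule closure_of_Union_locally_finite_at_nonisolated)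
    then show ?thesis unfolding disjnt_def by blast
  qed
  have cover: "S \<subseteq> (\<Union>n. h n)"
  proof
    fix x assume "x \<in> S"
    have x: "x \<in> topspace X - T"
      using assms(4,6) \<open>x \<in> S\<close> closedin_subset by (auto simp: disjnt_iff)
    have "openin X (topspace X - T)" using assms(5) by (simp add: closedin_def)
    then obtain U where U: "openin X U" "x \<in> U" "X closure_of U \<subseteq> topspace X - T"
      using regular_space_closure_nbhd[OF reg _ x] by blast
    then have "\<exists>V \<in> (\<Union>i. \<B>s i). x \<in> V \<and> V \<subseteq> U"
      using base unfolding is_base_def by blast
    then obtain V i where V: "V \<in> \<B>s i" "x \<in> V" "V \<subseteq> U" by blast
    have "X closure_of V \<subseteq> topspace X - T" using closure_of_mono[OF V(3)] U(3) by blast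
    then have "disjnt T (X closure_of V)" unfolding disjnt_def by blast
    with V show "x \<in> (\<Union>n. h n)" unfolding h_def by blast
  qed
  show ?thesis using open_h closure_h cover by blast
qed

text \<open>A regular space with a \<sigma>-locally finite (at non-isolated points) base is normal:
  the usual "shrinking" trick turns the two countable covers into disjoint open sets.\<close>
lemma sigma_locally_finite_base_normal:
  fixes \<B>s :: "nat \<Rightarrow> 'a set set"
  assumes reg: "regular_space X" and base: "is_base X (\<Union>i. \<B>s i)"
    and lf: "\<And>i. locally_finite_at_nonisolated X (\<B>s i)"
  shows "normal_space X"
  unfolding normal_space_def
proof clarify
  fix S T assume clo: "closedin X S" "closedin X T" and "disjnt S T"
  obtain h :: "nat \<Rightarrow> 'a set" where
    opeh: "\<And>n. openin X (h n)" and dish: "\<And>n. disjnt T (X closure_of (h n))" and Sh: "S \<subseteq> (\<Union>n. h n)"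
    using sigma_locally_finite_base_cover[OF reg base lf clo \<open>disjnt S T\<close>] by blast
  have "disjnt T S" using \<open>disjnt S T\<close> by (simp add: disjnt_sym)
  then obtain k :: "nat \<Rightarrow> 'a set" where
    opek: "\<And>n. openin X (k n)" and disk: "\<And>n. disjnt S (X closure_of (k n))" and Tk: "T \<subseteq> (\<Union>n. k n)"
    using sigma_locally_finite_base_cover[OF reg base lf clo(2,1)] by blast
  have h_closure: "h i \<subseteq> X closure_of h i" and k_closure: "k i \<subseteq> X closure_of k i" for i
    by (simp_all add: closure_of_subset openin_subset opeh opek)
  define U where "U = (\<Union>i. h i - (\<Union>j<i. X closure_of k j))"
  define V where "V = (\<Union>i. k i - (\<Union>j\<le>i. X closure_of h j))"
  have "openin X U"
    unfolding U_def by (intro openin_Union) (auto intro!: openin_diff opeh closedin_Union)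
  moreover have "openin X V"
    unfolding V_def by (intro openin_Union) (auto intro!: openin_diff opek closedin_Union)
  moreover have "S \<subseteq> U"
  proof
    fix x assume "x \<in> S"
    then obtain i where "x \<in> h i" using Sh by blast
    moreover have "x \<notin> X closure_of k j" for j using disk[of j] \<open>x \<in> S\<close> by (auto simp: disjnt_iff)
    ultimately show "x \<in> U" unfolding U_def by blast
  qed
  moreover have "T \<subseteq> V"
  proof
    fix x assume "x \<in> T"
    then obtain i where "x \<in> k i" using Tk by blast
    moreover have "x \<notin> X closure_of h j" for j using dish[of j] \<open>x \<in> T\<close> by (auto simp: disjnt_iff)
    ultimately show "x \<in> V" unfolding V_def by blast
  qed
  moreover have "disjnt U V"
    unfolding disjnt_iff
  proof (intro allI notI)
    fix x assume "x \<in> U \<and> x \<in> V"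
    then obtain i j where i: "x \<in> h i" "\<forall>j'<i. x \<notin> X closure_of k j'"
      and j: "x \<in> k j" "\<forall>i'\<le>j. x \<notin> X closure_of h i'"
      unfolding U_def V_def by blast
    show False
    proof (cases "i \<le> j")
      case True then show False using i(1) j(2) h_closure by blast
    next
      case False then show False using j(1) i(2) k_closure by (meson not_le subsetD)
    qed
  qed
  ultimately show "\<exists>U V. openin X U \<and> openin X V \<and> S \<subseteq> U \<and> T \<subseteq> V \<and> disjnt U V" by blast
qed

definition weighted_sum :: "(nat \<Rightarrow> 'a \<Rightarrow> 'a \<Rightarrow> real) \<Rightarrow> 'a \<Rightarrow> 'a \<Rightarrow> real" where
  "weighted_sum p x y = (\<Sum>k. (1/2) ^ Suc k * p k x y)"

context
  fixes p :: "nat \<Rightarrow> 'a \<Rightarrow> 'a \<Rightarrow> real"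
  assumes p_nonneg: "\<And>k x y. 0 \<le> p k x y" and p_le_1: "\<And>k x y. p k x y \<le> 1"
begin

lemma summable_weighted_terms: "summable (\<lambda>k. (1/2::real) ^ Suc k * p k x y)"
proof (rule summable_comparison_test'[where g = "\<lambda>k. (1/2::real) ^ k" and N = 0])
  show "summable (\<lambda>k. (1/2::real) ^ k)" by (rule summable_geometric) simp
  fix k :: nat
  have "(1/2::real) ^ Suc k * p k x y \<le> (1/2) ^ Suc k * 1"
    by (rule mult_left_mono) (simp_all add: p_le_1)
  also have "\<dots> \<le> (1/2) ^ k" by simp
  finally show "norm ((1/2::real) ^ Suc k * p k x y) \<le> (1/2) ^ k" using p_nonneg[of k x y] by simp
qed

lemma weighted_term_le: "(1/2::real) ^ Suc k * p k x y \<le> weighted_sum p x y"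
proof -
  have "(\<Sum>j\<in>{k}. (1/2::real) ^ Suc j * p j x y) \<le> weighted_sum p x y"
    unfolding weighted_sum_def by (rule sum_le_suminf[OF summable_weighted_terms]) (auto simp: p_nonneg)
  then show ?thesis by simp
qed

lemma weighted_sum_nonneg: "0 \<le> weighted_sum p x y"
  unfolding weighted_sum_def by (intro suminf_nonneg summable_weighted_terms) (simp add: p_nonneg)

lemma weighted_sum_triangle:
  assumes "\<And>k. p k x z \<le> p k x y + p k y z"
  shows "weighted_sum p x z \<le> weighted_sum p x y + weighted_sum p y z"
proof -
  have "weighted_sum p x y + weighted_sum p y z =
      (\<Sum>k. (1/2::real) ^ Suc k * p k x y + (1/2) ^ Suc k * p k y z)"
    unfolding weighted_sum_def by (rule suminf_add[OF summable_weighted_terms summable_weighted_terms])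
  moreover have "weighted_sum p x z \<le> (\<Sum>k. (1/2::real) ^ Suc k * p k x y + (1/2) ^ Suc k * p k y z)"
    unfolding weighted_sum_def
  proof (rule suminf_le[OF _ summable_weighted_terms
        summable_add[OF summable_weighted_terms summable_weighted_terms]])
    fix k
    have "(1/2::real) ^ Suc k * p k x z \<le> (1/2) ^ Suc k * (p k x y + p k y z)"
      by (rule mult_left_mono) (simp_all add: assms)
    then show "(1/2::real) ^ Suc k * p k x z \<le> (1/2) ^ Suc k * p k x y + (1/2) ^ Suc k * p k y z"
      by (simp add: distrib_left)
  qed
  ultimately show ?thesis by simp
qed

lemma weighted_sum_le:
  assumes "0 \<le> c" "\<And>k. k < K \<Longrightarrow> p k x y \<le> c"
  shows "weighted_sum p x y \<le> c + (1/2) ^ K"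
proof -
  let ?t = "\<lambda>k. (1/2::real) ^ Suc k * p k x y"
  have "weighted_sum p x y = (\<Sum>n. ?t (n + K)) + (\<Sum>k<K. ?t k)"
    unfolding weighted_sum_def by (rule suminf_split_initial_segment[OF summable_weighted_terms])
  moreover have "(\<Sum>k<K. ?t k) \<le> c"
  proof -
    have "(\<Sum>k<K. ?t k) \<le> (\<Sum>k<K. (1/2::real) ^ Suc k) * c"
      unfolding sum_distrib_right by (intro sum_mono mult_left_mono) (simp_all add: assms(2))
    also have "(\<Sum>k<K. (1/2::real) ^ Suc k) = 1 - (1/2) ^ K"
      by (induction K) (auto simp: field_simps)
    also have "(1 - (1/2::real) ^ K) * c \<le> c"
      using mult_right_mono[of "1 - (1/2::real) ^ K" 1 c] assms(1) by simp
    finally show ?thesis .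
  qed
  moreover have "(\<Sum>n. ?t (n + K)) \<le> (\<Sum>n. (1/2::real) ^ Suc K * (1/2) ^ n)"
  proof (rule suminf_le)
    show "?t (n + K) \<le> (1/2::real) ^ Suc K * (1/2) ^ n" for n
    proof -
      have "?t (n + K) \<le> (1/2::real) ^ Suc (n + K) * 1" by (rule mult_left_mono) (simp_all add: p_le_1)
      then show ?thesis by (simp add: power_add)
    qed
    show "summable (\<lambda>n. ?t (n + K))"
      using summable_weighted_terms[of x y] summable_iff_shift[of ?t K] by simp
    show "summable (\<lambda>n. (1/2::real) ^ Suc K * (1/2) ^ n)"
      by (rule summable_mult, rule summable_geometric) simp
  qed
  moreover have "(\<Sum>n. (1/2::real) ^ Suc K * (1/2) ^ n) = (1/2) ^ K"
    by (subst suminf_mult) (auto intro: summable_geometric simp: suminf_geometric)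
  ultimately show ?thesis by linarith
qed

lemma weighted_sum_locally_small:
  assumes small: "\<And>k \<epsilon>. \<epsilon> > 0 \<Longrightarrow> \<exists>N. openin X N \<and> x \<in> N \<and> (\<forall>y \<in> N. p k x y \<le> \<epsilon>)"
    and x: "x \<in> topspace X" and "\<epsilon> > 0"
  shows "\<exists>N. openin X N \<and> x \<in> N \<and> (\<forall>y \<in> N. weighted_sum p x y < \<epsilon>)"
proof -
  obtain K where K: "(1/2::real) ^ K < \<epsilon> / 2"
    using real_arch_pow_inv[of "\<epsilon> / 2" "1/2"] \<open>\<epsilon> > 0\<close> by auto
  have "\<forall>k. \<exists>N. openin X N \<and> x \<in> N \<and> (\<forall>y \<in> N. p k x y \<le> \<epsilon> / 2)"
    using small[OF half_gt_zero[OF \<open>\<epsilon> > 0\<close>]] by blast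
  then have "\<exists>N. \<forall>k. openin X (N k) \<and> x \<in> N k \<and> (\<forall>y \<in> N k. p k x y \<le> \<epsilon> / 2)"
    by (rule choice)
  then obtain N where N: "\<And>k. openin X (N k)" "\<And>k. x \<in> N k" "\<And>k y. y \<in> N k \<Longrightarrow> p k x y \<le> \<epsilon> / 2"
    by blast
  have "openin X ((\<Inter>k \<in> {..<K}. N k) \<inter> topspace X)" by (rule openin_INT) (auto simp: N)
  moreover have "x \<in> (\<Inter>k \<in> {..<K}. N k) \<inter> topspace X" using N(2) x by blast
  moreover have "weighted_sum p x y < \<epsilon>" if "y \<in> (\<Inter>k \<in> {..<K}. N k) \<inter> topspace X" for y
  proof -
    have "weighted_sum p x y \<le> \<epsilon> / 2 + (1/2) ^ K"
      by (rule weighted_sum_le) (use that N(3) \<open>\<epsilon> > 0\<close> in auto)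
    with K show ?thesis by linarith
  qed
  ultimately show ?thesis by blast
qed

theorem metrizable_by_pseudometrics:
  assumes t1: "t1_space X"
    and sym: "\<And>k x y. p k x y = p k y x" and refl: "\<And>k x. p k x x = 0"
    and triangle: "\<And>k x y z. p k x z \<le> p k x y + p k y z"
    and small: "\<And>k x \<epsilon>. x \<in> topspace X \<Longrightarrow> \<epsilon> > 0 \<Longrightarrow>
      \<exists>N. openin X N \<and> x \<in> N \<and> (\<forall>y \<in> N. p k x y \<le> \<epsilon>)"
    and separate: "\<And>W x. openin X W \<Longrightarrow> x \<in> W \<Longrightarrow> \<exists>k. \<forall>y \<in> topspace X - W. 1 \<le> p k x y"
  shows "metrizable_space X"
proof -
  have positive: "0 < weighted_sum p x y"
    if xy: "x \<in> topspace X" "y \<in> topspace X" "x \<noteq> y" for x y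
  proof -
    have "\<exists>W. openin X W \<and> x \<in> W \<and> y \<notin> W"
      using t1 xy unfolding t1_space_def by blast
    then obtain W where W: "openin X W" "x \<in> W" "y \<notin> W" by blast
    then obtain k where "1 \<le> p k x y" using separate xy(2) by blast
    then have "(1/2::real) ^ Suc k \<le> (1/2) ^ Suc k * p k x y" by simp
    moreover have "(1/2) ^ Suc k * p k x y \<le> weighted_sum p x y" by (rule weighted_term_le)
    moreover have "(0::real) < (1/2) ^ Suc k" by simp
    ultimately show ?thesis by linarith
  qed
  interpret D: Metric_space "topspace X" "weighted_sum p"
  proof
    show "0 \<le> weighted_sum p x y" for x y by (rule weighted_sum_nonneg)
    show "weighted_sum p x y = weighted_sum p y x" for x y
      unfolding weighted_sum_def by (simp add: sym)
    show "weighted_sum p x y = 0 \<longleftrightarrow> x = y" if xy: "x \<in> topspace X" "y \<in> topspace X" for x y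
    proof (rule iffI)
      assume "weighted_sum p x y = 0"
      then show "x = y" using positive[OF xy] by (metis less_irrefl)
    next
      assume "x = y"
      then show "weighted_sum p x y = 0" by (simp add: weighted_sum_def refl)
    qed
    show "weighted_sum p x z \<le> weighted_sum p x y + weighted_sum p y z" for x y z
      by (rule weighted_sum_triangle[OF triangle])
  qed
  have "X = D.mtopology"
    unfolding topology_eq
  proof (intro allI iffI)
    fix S assume S: "openin X S"
    show "openin D.mtopology S" unfolding D.openin_mtopology
    proof (intro conjI allI impI)
      show "S \<subseteq> topspace X" using S openin_subset by blast
      fix x assume "x \<in> S"
      then obtain k where k: "\<forall>y \<in> topspace X - S. 1 \<le> p k x y" using separate S by blast
      have "D.mball x ((1/2) ^ Suc k) \<subseteq> S"
      proof
        fix y assume "y \<in> D.mball x ((1/2) ^ Suc k)"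
        then have y: "y \<in> topspace X" "weighted_sum p x y < (1/2) ^ Suc k" by simp_all
        then have "(1/2::real) ^ Suc k * p k x y < (1/2) ^ Suc k * 1"
          using weighted_term_le[of k x y] by linarith
        then have "p k x y < 1" by (simp add: mult_less_cancel_left_pos)
        then show "y \<in> S" using k y(1) by force
      qed
      then show "\<exists>r>0. D.mball x r \<subseteq> S" by (intro exI[of _ "(1/2) ^ Suc k"]) simp
    qed
  next
    fix S assume S: "openin D.mtopology S"
    show "openin X S" unfolding openin_subopen[of X S]
    proof
      fix x assume "x \<in> S"
      have "S \<subseteq> topspace X" "\<exists>r>0. D.mball x r \<subseteq> S"
        using S \<open>x \<in> S\<close> unfolding D.openin_mtopology by blast+
      then obtain r where r: "r > 0" "D.mball x r \<subseteq> S" and x: "x \<in> topspace X"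
        using \<open>x \<in> S\<close> by blast
      obtain N where N: "openin X N" "x \<in> N" "\<forall>y \<in> N. weighted_sum p x y < r"
        using weighted_sum_locally_small[OF small[OF x] x r(1)] by blast
      have "N \<subseteq> D.mball x r" using N x openin_subset[OF N(1)] by auto
      with N r show "\<exists>T. openin X T \<and> x \<in> T \<and> T \<subseteq> S" by blast
    qed
  qed
  then show ?thesis using D.metrizable_space_mtopology by simp
qed

end

text \<open>For an open U, a Urysohn function vanishing off U and equal to 1 on every member of
  the family whose closure lies in U; the closure of the union of these members is
  contained in U by local finiteness.\<close>
lemma urysohn_function_for_open_set:
  assumes "normal_space X" "locally_finite_at_nonisolated X \<F>"
    and open_\<F>: "\<And>V. V \<in> \<F> \<Longrightarrow> openin X V" and "openin X U"
  shows "\<exists>g. continuous_map X euclideanreal g \<and> (\<forall>x \<in> topspace X - U. g x = 0) \<and>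
    (\<forall>V \<in> \<F>. X closure_of V \<subseteq> U \<longrightarrow> (\<forall>x \<in> V. g x = 1))"
proof -
  define C where "C = \<Union>{V \<in> \<F>. X closure_of V \<subseteq> U}"
  have "locally_finite_at_nonisolated X {V \<in> \<F>. X closure_of V \<subseteq> U}"
    by (rule locally_finite_at_nonisolated_subset[OF assms(2)]) blast
  then have "X closure_of C \<subseteq> (\<Union>V \<in> {V \<in> \<F>. X closure_of V \<subseteq> U}. X closure_of V)"
    unfolding C_def by (rule closure_of_Union_locally_finite_at_nonisolated)
  then have "X closure_of C \<subseteq> U" by blast
  then have disjoint: "disjnt (topspace X - U) (X closure_of C)" unfolding disjnt_def by blast
  have closed: "closedin X (topspace X - U)" by (intro closedin_diff closedin_topspace assms(4))
  obtain g where g: "continuous_map X euclideanreal g"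
      "g ` (topspace X - U) \<subseteq> {0}" "g ` (X closure_of C) \<subseteq> {1}"
    by (rule Urysohn_lemma_alt[OF assms(1) closed closedin_closure_of disjoint])
  have zero: "\<forall>x \<in> topspace X - U. g x = 0" using g(2) by (simp add: image_subset_iff)
  have one: "\<forall>V \<in> \<F>. X closure_of V \<subseteq> U \<longrightarrow> (\<forall>x \<in> V. g x = 1)"
  proof (intro ballI impI)
    fix V x assume V: "V \<in> \<F>" "X closure_of V \<subseteq> U" and "x \<in> V"
    have "V \<subseteq> topspace X" by (rule openin_subset[OF open_\<F>[OF V(1)]])
    then have "x \<in> topspace X" using \<open>x \<in> V\<close> by (rule subsetD)
    moreover have "x \<in> C" unfolding C_def using V \<open>x \<in> V\<close> by blast
    ultimately have "x \<in> X closure_of C" using closure_of_subset_Int[of X C] by blast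
    then show "g x = 1" using g(3) by (simp add: image_subset_iff)
  qed
  show ?thesis using g(1) zero one by blast
qed

definition sup_pseudometric :: "'b set \<Rightarrow> ('b \<Rightarrow> 'a \<Rightarrow> real) \<Rightarrow> 'a \<Rightarrow> 'a \<Rightarrow> real" where
  "sup_pseudometric \<F> f x y = Sup ((\<lambda>U. min 1 \<bar>f U x - f U y\<bar>) ` \<F> \<union> {0})"

lemma sup_pseudometric_bdd:
  fixes f :: "'b \<Rightarrow> 'a \<Rightarrow> real"
  shows "bdd_above ((\<lambda>U. min 1 \<bar>f U x - f U y\<bar>) ` \<F> \<union> {0})"
  by (rule bdd_aboveI[of _ 1]) auto

lemma sup_pseudometric_ge: "U \<in> \<F> \<Longrightarrow> min 1 \<bar>f U x - f U y\<bar> \<le> sup_pseudometric \<F> f x y"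
  unfolding sup_pseudometric_def by (rule cSup_upper[OF _ sup_pseudometric_bdd]) blast

lemma sup_pseudometric_nonneg: "0 \<le> sup_pseudometric \<F> f x y"
  unfolding sup_pseudometric_def by (rule cSup_upper[OF _ sup_pseudometric_bdd]) blast

lemma sup_pseudometric_le:
  assumes "0 \<le> c" "\<And>U. U \<in> \<F> \<Longrightarrow> min 1 \<bar>f U x - f U y\<bar> \<le> c"
  shows "sup_pseudometric \<F> f x y \<le> c"
  unfolding sup_pseudometric_def by (rule cSup_least) (use assms in auto)

lemma sup_pseudometric_le_1: "sup_pseudometric \<F> f x y \<le> 1"
  using sup_pseudometric_le[of 1 \<F> f x y] by simp

lemma sup_pseudometric_refl: "sup_pseudometric \<F> f x x = 0"
  using sup_pseudometric_le[of 0 \<F> f x x] sup_pseudometric_nonneg[of \<F> f x x] by simp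

lemma sup_pseudometric_sym: "sup_pseudometric \<F> f x y = sup_pseudometric \<F> f y x"
  by (simp add: sup_pseudometric_def abs_minus_commute)

lemma sup_pseudometric_triangle:
  "sup_pseudometric \<F> f x z \<le> sup_pseudometric \<F> f x y + sup_pseudometric \<F> f y z"
proof (rule sup_pseudometric_le)
  show "0 \<le> sup_pseudometric \<F> f x y + sup_pseudometric \<F> f y z"
    by (simp add: sup_pseudometric_nonneg add_nonneg_nonneg)
  fix U assume U: "U \<in> \<F>"
  have "min 1 \<bar>f U x - f U z\<bar> \<le> min 1 \<bar>f U x - f U y\<bar> + min 1 \<bar>f U y - f U z\<bar>" by linarith
  then show "min 1 \<bar>f U x - f U z\<bar> \<le> sup_pseudometric \<F> f x y + sup_pseudometric \<F> f y z"
    using sup_pseudometric_ge[OF U, of f x y] sup_pseudometric_ge[OF U, of f y z] by linarith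
qed

text \<open>If the functions are continuous and vanish off the members of a family that is
  locally finite at non-isolated points, the supremum pseudometric is small near x: at an
  isolated point take {x}; otherwise only finitely many functions are not identically 0
  near x.\<close>
lemma sup_pseudometric_locally_small:
  assumes lf: "locally_finite_at_nonisolated X \<F>"
    and cont: "\<And>U. U \<in> \<F> \<Longrightarrow> continuous_map X euclideanreal (f U)"
    and vanish: "\<And>U y. U \<in> \<F> \<Longrightarrow> y \<in> topspace X - U \<Longrightarrow> f U y = 0"
    and x: "x \<in> topspace X" and "\<epsilon> > 0"
  shows "\<exists>N. openin X N \<and> x \<in> N \<and> (\<forall>y \<in> N. sup_pseudometric \<F> f x y \<le> \<epsilon>)"
proof (cases "x \<in> isolated_points X")
  case True
  then have "openin X {x}" by (simp add: isolated_points_def)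
  moreover have "sup_pseudometric \<F> f x x \<le> \<epsilon>"
    using \<open>\<epsilon> > 0\<close> by (simp add: sup_pseudometric_refl)
  ultimately show ?thesis using x by blast
next
  case False
  then have "\<exists>N0. openin X N0 \<and> x \<in> N0 \<and> finite {U \<in> \<F>. U \<inter> N0 \<noteq> {}}"
    using lf x unfolding locally_finite_at_nonisolated_def by blast
  then obtain N0 where N0: "openin X N0" "x \<in> N0" "finite {U \<in> \<F>. U \<inter> N0 \<noteq> {}}"
    by blast
  define \<G> where "\<G> = {U \<in> \<F>. U \<inter> N0 \<noteq> {}}"
  define N where "N = N0 \<inter> ((\<Inter>U \<in> \<G>. {y \<in> topspace X. f U y \<in> ball (f U x) \<epsilon>}) \<inter> topspace X)"
  have "openin X ((\<Inter>U \<in> \<G>. {y \<in> topspace X. f U y \<in> ball (f U x) \<epsilon>}) \<inter> topspace X)"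
  proof (rule openin_INT)
    show "finite \<G>" using N0(3) by (simp add: \<G>_def)
    show "openin X {y \<in> topspace X. f U y \<in> ball (f U x) \<epsilon>}" if "U \<in> \<G>" for U
      using that by (intro openin_continuous_map_preimage[OF cont]) (auto simp: \<G>_def)
  qed
  then have "openin X N" unfolding N_def using N0(1) by blast
  moreover have "x \<in> N" unfolding N_def using N0(2) x \<open>\<epsilon> > 0\<close> by auto
  moreover have "sup_pseudometric \<F> f x y \<le> \<epsilon>" if y: "y \<in> N" for y
  proof (rule sup_pseudometric_le)
    show "0 \<le> \<epsilon>" using \<open>\<epsilon> > 0\<close> by simp
    fix U assume U: "U \<in> \<F>"
    show "min 1 \<bar>f U x - f U y\<bar> \<le> \<epsilon>"
    proof (cases "U \<in> \<G>")
      case True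
      then have "f U y \<in> ball (f U x) \<epsilon>" using y unfolding N_def by blast
      then show ?thesis by (simp add: dist_real_def)
    next
      case False
      then have "U \<inter> N0 = {}" using U by (simp add: \<G>_def)
      moreover have "y \<in> N0" "y \<in> topspace X" using y unfolding N_def by auto
      ultimately have "f U x = 0" "f U y = 0" using vanish[OF U] x N0(2) by blast+
      then show ?thesis using \<open>\<epsilon> > 0\<close> by simp
    qed
  qed
  ultimately show ?thesis by blast
qed

text \<open>For base
  members U and V with closure of V inside U, the Urysohn function for U (relative to
  the family containing V) separates; the pseudometrics of the countably many families
  indexed by pairs (n, m) fulfil the hypotheses of metrizable_by_pseudometrics.\<close>
theorem sigma_locally_finite_base_imp_metrizable:
  fixes \<B>s :: "nat \<Rightarrow> 'a set set"
  assumes reg: "regular_space X" and t1: "t1_space X" and base: "is_base X (\<Union>i. \<B>s i)"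
    and lf: "\<And>i. locally_finite_at_nonisolated X (\<B>s i)"
  shows "metrizable_space X"
proof -
  have normal: "normal_space X" by (rule sigma_locally_finite_base_normal[OF reg base lf])
  have open_base: "openin X V" if "V \<in> \<B>s i" for V i
    using base that unfolding is_base_def by blast
  let ?urysohn = "\<lambda>m U g. continuous_map X euclideanreal g \<and> (\<forall>x \<in> topspace X - U. g x = 0) \<and>
    (\<forall>V \<in> \<B>s m. X closure_of V \<subseteq> U \<longrightarrow> (\<forall>x \<in> V. g x = 1))"
  define f where "f m U = (SOME g. ?urysohn m U g)" for m U
  have f: "?urysohn m U (f m U)" if "openin X U" for m U
    unfolding f_def by (rule someI_ex[OF urysohn_function_for_open_set[OF normal lf open_base that]])
  have f_cont: "continuous_map X euclideanreal (f m U)" if "openin X U" for m U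
    using f[OF that] by blast
  have f_zero: "f m U x = 0" if "openin X U" "x \<in> topspace X - U" for m U x
    using f[OF that(1)] that(2) by blast
  have f_one: "f m U x = 1" if "openin X U" "V \<in> \<B>s m" "X closure_of V \<subseteq> U" "x \<in> V" for m U V x
    using f[OF that(1)] that(2-4) by blast
  define p where "p k = sup_pseudometric (\<B>s (fst (prod_decode k))) (f (snd (prod_decode k)))" for k
  show ?thesis
  proof (rule metrizable_by_pseudometrics[OF _ _ t1])
    show "0 \<le> p k x y" "p k x y \<le> 1" "p k x x = 0" "p k x z \<le> p k x y + p k y z" for k x y z
      unfolding p_def by (simp_all add: sup_pseudometric_nonneg sup_pseudometric_le_1
          sup_pseudometric_refl sup_pseudometric_triangle)
    show "p k x y = p k y x" for k x y
      unfolding p_def by (rule sup_pseudometric_sym)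
    show "\<exists>N. openin X N \<and> x \<in> N \<and> (\<forall>y \<in> N. p k x y \<le> \<epsilon>)"
      if "x \<in> topspace X" "\<epsilon> > 0" for k x \<epsilon>
      unfolding p_def
      by (rule sup_pseudometric_locally_small[OF lf f_cont[OF open_base] f_zero[OF open_base] that])
    show "\<exists>k. \<forall>y \<in> topspace X - W. 1 \<le> p k x y" if W: "openin X W" "x \<in> W" for W x
    proof -
      have "\<exists>U \<in> (\<Union>i. \<B>s i). x \<in> U \<and> U \<subseteq> W" using base W unfolding is_base_def by blast
      then obtain U n where U: "U \<in> \<B>s n" "x \<in> U" "U \<subseteq> W" by blast
      obtain W' where W': "openin X W'" "x \<in> W'" "X closure_of W' \<subseteq> U"
        using regular_space_closure_nbhd[OF reg open_base[OF U(1)] U(2)] by blast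
      have "\<exists>V \<in> (\<Union>i. \<B>s i). x \<in> V \<and> V \<subseteq> W'" using base W' unfolding is_base_def by blast
      then obtain V m where V: "V \<in> \<B>s m" "x \<in> V" "V \<subseteq> W'" by blast
      have "X closure_of V \<subseteq> U" using closure_of_mono[OF V(3)] W'(3) by blast
      then have fx: "f m U x = 1" using f_one[OF open_base[OF U(1)] V(1)] V(2) by blast
      have "1 \<le> p (prod_encode (n, m)) x y" if "y \<in> topspace X - W" for y
      proof -
        have "f m U y = 0" using f_zero[OF open_base[OF U(1)]] that U(3) by blast
        then show ?thesis
          using sup_pseudometric_ge[OF U(1), of "f m" x y] fx unfolding p_def by simp
      qed
      then show ?thesis by blast
    qed
  qed
qed

theorem mainTheorem10:
  fixes X :: "'a topology"
  assumes "regular_space X" and "t1_space X"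
  shows "(metrizable_space X \<longleftrightarrow>
            (\<exists>\<B>. is_base X \<B> \<and> sigma_discrete_at_nonisolated X \<B>)) \<and>
         (metrizable_space X \<longleftrightarrow>
            (\<exists>\<B>. is_base X \<B> \<and> sigma_locally_finite_at_nonisolated X \<B>))"
proof -
  have discrete: "\<exists>\<B>. is_base X \<B> \<and> sigma_discrete_at_nonisolated X \<B>" if "metrizable_space X"
    using metrizable_imp_sigma_discrete_base[OF that] .
  have locally_finite: "\<exists>\<B>. is_base X \<B> \<and> sigma_locally_finite_at_nonisolated X \<B>"
    if "\<exists>\<B>. is_base X \<B> \<and> sigma_discrete_at_nonisolated X \<B>"
    using that discrete_imp_locally_finite_at_nonisolated
    unfolding sigma_discrete_at_nonisolated_def sigma_locally_finite_at_nonisolated_def by blast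
  have metrizable: "metrizable_space X"
    if lf_base: "\<exists>\<B>. is_base X \<B> \<and> sigma_locally_finite_at_nonisolated X \<B>"
  proof -
    obtain \<B>s :: "nat \<Rightarrow> 'a set set"
      where "is_base X (\<Union>i. \<B>s i)" "\<And>i. locally_finite_at_nonisolated X (\<B>s i)"
      using lf_base unfolding sigma_locally_finite_at_nonisolated_def by blast
    then show ?thesis by (rule sigma_locally_finite_base_imp_metrizable[OF assms])
  qed
  show ?thesis using discrete locally_finite metrizable by blast
qed

end
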